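(* (1) All inert tori in $G$ are conjugate in $G$. (2) If $T$ is an inert torus, there exists $g\in G$ such that $gTg^{-1}$ is an inert torus in canonical form. (3) If $T_1,T_2$ are inert tori in canonical form, there exists $y\in\mathfrak o^\times$ such that $T_1=a(y)T_2a(y)^{-1}$. (4) If $T$ is an inert torus in canonical form, then $G=B_1T=TB_1$ and $K=B_1(\mathfrak o)T(\mathfrak o)=T(\mathfrak o)B_1(\mathfrak o)$.
   Context: $F$ is a non-archimedean local field of characteristic zero with ring of integers $\mathfrak o$ and odd residue field cardinality; $E$ is its unramified quadratic extension. $G=\mathrm{GL}_2(F)$, $K=\mathrm{GL}_2(\mathfrak o)$, $a(y)=\begin{pmatrix}y&0\\0&1\end{pmatrix}$, $B_1=\{\begin{pmatrix}y&x\\0&1\end{pmatrix}:y\in F^\times,x\in F\}$, $B_1(\mathfrak o)=B_1\cap K$. For $\alpha,\beta,\gamma\in F$ let $S=\begin{pmatrix}\alpha&\beta/2\\\beta/2&\gamma\end{pmatrix}$ and $T_{\alpha,\beta,\gamma}=\{g\in G:{}^tgSg=\det(g)S\}$. A subgroup $T$ is an inert torus if $T=T_{\alpha,\beta,\gamma}$ with $\delta=\beta^2-4\alpha\gamma$ satisfying $F(\sqrt\delta)=E$ (equivalently $\delta$ is a non-square with $v(\delta)$ even). It is in canonical form if $T=T_{\alpha,0,1}$ with $\alpha\in\mathfrak o^\times$ and $-\alpha$ not a square in $\mathfrak o^\times$. $T(\mathfrak o)=T\cap K$. *)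

theory Defs
  imports "HOL-Analysis.Analysis"
begin

text \<open>A normalized discrete valuation v on a field; v 0 is irrelevant (junk).\<close>
definition discrete_valuation :: "('a::field \<Rightarrow> int) \<Rightarrow> bool" where
  "discrete_valuation v \<longleftrightarrow>
     (\<forall>x y. x \<noteq> 0 \<longrightarrow> y \<noteq> 0 \<longrightarrow> v (x * y) = v x + v y) \<and>
     (\<forall>x y. x \<noteq> 0 \<longrightarrow> y \<noteq> 0 \<longrightarrow> x + y \<noteq> 0 \<longrightarrow> v (x + y) \<ge> min (v x) (v y)) \<and>
     (\<forall>n::int. \<exists>x. x \<noteq> 0 \<and> v x = n)"

definition int_ring :: "('a::field \<Rightarrow> int) \<Rightarrow> 'a set" where
  "int_ring v = {x. x = 0 \<or> v x \<ge> 0}"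

definition int_units :: "('a::field \<Rightarrow> int) \<Rightarrow> 'a set" where
  "int_units v = {x. x \<noteq> 0 \<and> v x = 0}"

definition max_ideal :: "('a::field \<Rightarrow> int) \<Rightarrow> 'a set" where
  "max_ideal v = {x. x = 0 \<or> v x > 0}"

text \<open>Elements of the residue field o/p, as cosets inside o.\<close>
definition residue_field :: "('a::field \<Rightarrow> int) \<Rightarrow> 'a set set" where
  "residue_field v = (\<lambda>x. {y \<in> int_ring v. y - x \<in> max_ideal v}) ` int_ring v"

definition v_cauchy :: "('a::field \<Rightarrow> int) \<Rightarrow> (nat \<Rightarrow> 'a) \<Rightarrow> bool" where
  "v_cauchy v s \<longleftrightarrow> (\<forall>N::int. \<exists>M. \<forall>m\<ge>M. \<forall>n\<ge>M. s m = s n \<or> v (s m - s n) \<ge> N)"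

definition v_converges :: "('a::field \<Rightarrow> int) \<Rightarrow> (nat \<Rightarrow> 'a) \<Rightarrow> 'a \<Rightarrow> bool" where
  "v_converges v s L \<longleftrightarrow> (\<forall>N::int. \<exists>M. \<forall>n\<ge>M. s n = L \<or> v (s n - L) \<ge> N)"

definition nonarch_local_field :: "('a::field \<Rightarrow> int) \<Rightarrow> bool" where
  "nonarch_local_field v \<longleftrightarrow> discrete_valuation v \<and>
     (\<forall>s. v_cauchy v s \<longrightarrow> (\<exists>L. v_converges v s L)) \<and>
     finite (residue_field v)"

type_synonym 'a mat2 = "'a^2^2"

definition mk2 :: "'a \<Rightarrow> 'a \<Rightarrow> 'a \<Rightarrow> 'a \<Rightarrow> 'a mat2" where
  "mk2 a b c d = (\<chi> i j. if i = 1 then (if j = 1 then a else b) else (if j = 1 then c else d))"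

definition GL2 :: "'a::field mat2 set" where
  "GL2 = {g. det g \<noteq> 0}"

definition GL2_O :: "('a::field \<Rightarrow> int) \<Rightarrow> 'a mat2 set" where
  "GL2_O v = {g. (\<forall>i j. g $ i $ j \<in> int_ring v) \<and> det g \<in> int_units v}"

definition a_mat :: "'a::field \<Rightarrow> 'a mat2" where
  "a_mat y = mk2 y 0 0 1"

definition B1 :: "'a::field mat2 set" where
  "B1 = {mk2 y x 0 1 | y x. y \<noteq> 0}"

definition B1_O :: "('a::field \<Rightarrow> int) \<Rightarrow> 'a mat2 set" where
  "B1_O v = B1 \<inter> GL2_O v"

definition Smat :: "'a::field_char_0 \<Rightarrow> 'a \<Rightarrow> 'a \<Rightarrow> 'a mat2" where
  "Smat \<alpha> \<beta> \<gamma> = mk2 \<alpha> (\<beta>/2) (\<beta>/2) \<gamma>"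

definition torus :: "'a::field_char_0 \<Rightarrow> 'a \<Rightarrow> 'a \<Rightarrow> 'a mat2 set" where
  "torus \<alpha> \<beta> \<gamma> = {g \<in> GL2. transpose g ** Smat \<alpha> \<beta> \<gamma> ** g = mat (det g) ** Smat \<alpha> \<beta> \<gamma>}"

definition is_square :: "'a::field \<Rightarrow> bool" where
  "is_square d \<longleftrightarrow> (\<exists>r. d = r * r)"

text \<open>Inert torus: delta = beta^2 - 4 alpha gamma is a non-square of even valuation,
  i.e. F(sqrt delta) is the unramified quadratic extension E.\<close>
definition inert_torus :: "('a::field_char_0 \<Rightarrow> int) \<Rightarrow> 'a mat2 set \<Rightarrow> bool" where
  "inert_torus v T \<longleftrightarrow> (\<exists>\<alpha> \<beta> \<gamma>. T = torus \<alpha> \<beta> \<gamma> \<and>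
      \<not> is_square (\<beta>^2 - 4*\<alpha>*\<gamma>) \<and> even (v (\<beta>^2 - 4*\<alpha>*\<gamma>)))"

definition canonical_inert :: "('a::field_char_0 \<Rightarrow> int) \<Rightarrow> 'a mat2 set \<Rightarrow> bool" where
  "canonical_inert v T \<longleftrightarrow> inert_torus v T \<and> (\<exists>\<alpha>. T = torus \<alpha> 0 1 \<and> \<alpha> \<in> int_units v \<and>
      \<not> (\<exists>u \<in> int_units v. -\<alpha> = u * u))"

definition conj_set :: "'a::field mat2 \<Rightarrow> 'a mat2 set \<Rightarrow> 'a mat2 set" where
  "conj_set g T = (\<lambda>t. g ** t ** matrix_inv g) ` T"

definition set_prod :: "'a::field mat2 set \<Rightarrow> 'a mat2 set \<Rightarrow> 'a mat2 set" where
  "set_prod A B = {a ** b | a b. a \<in> A \<and> b \<in> B}"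

end

theory Submission
  imports Defs
begin

(* An inert torus T(alpha, beta, gamma) has gamma <> 0, and completing the square conjugates it
   to T(alpha', 0, 1) with -alpha' = t^2 delta / (4 gamma^2); since v(delta) is even, t can be chosen
   to make alpha' a unit, and -alpha' is a non-square because delta is, which gives (2).
   The residue characteristic is odd, so by Hensel's lemma a unit is a square iff it is a
   square modulo p, and squares have index two in the units of the residue field; hence the
   product of two non-square units is a square. For canonical tori this gives
   alpha1 alpha2 = r^2, and conjugation by a(r / alpha1) turns T(alpha2, 0, 1) into
   T(alpha1, 0, 1), which is (3); (1) follows from (2) and (3).
   For (4), a matrix g with bottom row (r, s) is b t with t = [[s, -r/alpha], [r, s]] in T and
   b = g t^-1 in B1. The determinant (alpha s^2 + r^2)/alpha of t is nonzero because -alpha is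
   not a square, and for g in K it is a unit because -alpha is not even a square modulo p while
   (r, s) is primitive. The factorisations T B1 follow by taking inverses. *)

section \<open>2 \<times> 2 matrices\<close>

lemma mk2_eq_iff [simp]:
  "mk2 a b c d = mk2 a' b' c' d' \<longleftrightarrow> a = a' \<and> b = b' \<and> c = c' \<and> d = d'"
  unfolding mk2_def by (auto simp: vec_eq_iff forall_2)

lemma mk2_nth [simp]:
  "mk2 a b c d $ 1 $ 1 = a" "mk2 a b c d $ 1 $ 2 = b" "mk2 a b c d $ 2 $ 1 = c" "mk2 a b c d $ 2 $ 2 = d"
  unfolding mk2_def by auto

lemma mk2_exhaust:
  obtains a b c d where "g = mk2 a b c d"
proof
  show "g = mk2 (g$1$1) (g$1$2) (g$2$1) (g$2$2)"
    unfolding mk2_def by (auto simp: vec_eq_iff forall_2)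
qed

lemma mk2_mult [simp]:
  "mk2 a b c d ** mk2 a' b' c' d' = mk2 (a*a' + b*c') (a*b' + b*d') (c*a' + d*c') (c*b' + d*d')"
  by (simp add: mk2_def matrix_matrix_mult_def vec_eq_iff forall_2 UNIV_2)

lemma transpose_mk2 [simp]: "transpose (mk2 a b c d) = mk2 a c b d"
  by (simp add: mk2_def transpose_def vec_eq_iff forall_2)

lemma det_mk2 [simp]: "det (mk2 a b c (d::'a::comm_ring_1)) = a*d - b*c"
  by (simp add: det_2)

lemma mk2_add [simp]: "mk2 a b c d + mk2 a' b' c' d' = mk2 (a + a') (b + b') (c + c') (d + d')"
  by (simp add: mk2_def vec_eq_iff forall_2)

lemma zero_eq_mk2: "0 = mk2 0 0 0 0"
  by (simp add: mk2_def vec_eq_iff forall_2)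

lemma mat_eq_mk2: "mat x = mk2 x 0 0 x"
  by (simp add: mk2_def mat_def vec_eq_iff forall_2)

lemma matrix_inv_right:
  fixes A :: "'a::field^'n^'n"
  assumes "det A \<noteq> 0"
  shows "A ** matrix_inv A = mat 1"
  using assms someI_ex[of "\<lambda>B. A ** B = mat 1 \<and> B ** A = mat 1"]
  unfolding invertible_det_nz[symmetric] invertible_def matrix_inv_def by blast

lemma matrix_inv_left:
  fixes A :: "'a::field^'n^'n"
  assumes "det A \<noteq> 0"
  shows "matrix_inv A ** A = mat 1"
  using matrix_inv_right[OF assms] matrix_left_right_inverse by blast

lemma matrix_inv_eqI:
  fixes A B :: "'a::field^'n^'n"
  assumes "A ** B = mat 1"
  shows "matrix_inv A = B"
proof -
  have "det A \<noteq> 0"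
    using assms invertible_det_nz invertible_right_inverse by blast
  then have "matrix_inv A = matrix_inv A ** (A ** B)"
    by (simp add: assms)
  also have "\<dots> = B"
    by (simp add: matrix_mul_assoc matrix_inv_left \<open>det A \<noteq> 0\<close>)
  finally show ?thesis .
qed

lemma det_matrix_inv:
  fixes A :: "'a::field^'n^'n"
  assumes "det A \<noteq> 0"
  shows "det (matrix_inv A) = inverse (det A)"
  using arg_cong[OF matrix_inv_left[OF assms], of det] assms
  by (simp add: det_mul field_simps)

lemma matrix_inv_matrix_inv:
  fixes A :: "'a::field^'n^'n"
  assumes "det A \<noteq> 0"
  shows "matrix_inv (matrix_inv A) = A"
  by (rule matrix_inv_eqI) (rule matrix_inv_left[OF assms])

lemma matrix_inv_mult:
  fixes A B :: "'a::field^'n^'n"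
  assumes "det A \<noteq> 0" "det B \<noteq> 0"
  shows "matrix_inv (A ** B) = matrix_inv B ** matrix_inv A"
proof (rule matrix_inv_eqI)
  have "A ** B ** (matrix_inv B ** matrix_inv A) = A ** (B ** matrix_inv B) ** matrix_inv A"
    by (simp only: matrix_mul_assoc)
  then show "A ** B ** (matrix_inv B ** matrix_inv A) = mat 1"
    by (simp add: matrix_inv_right assms)
qed

lemma matrix_mult_left_cancel:
  fixes A X Y :: "'a::field^'n^'n"
  assumes "det A \<noteq> 0"
  shows "A ** X = A ** Y \<longleftrightarrow> X = Y"
  by (metis assms matrix_inv_left matrix_mul_assoc matrix_mul_lid)

lemma matrix_inv_mk2:
  fixes a b c d :: "'a::field"
  assumes "a*d - b*c \<noteq> 0"
  shows "matrix_inv (mk2 a b c d) = mk2 (d/(a*d-b*c)) (-b/(a*d-b*c)) (-c/(a*d-b*c)) (a/(a*d-b*c))"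
proof -
  \<comment> \<open>naming the determinant keeps \<open>field_simps\<close> from multiplying out its square\<close>
  obtain D where D: "a*d - b*c = D" "D \<noteq> 0"
    using assms by blast
  have "mk2 a b c d ** mk2 (d/D) (-b/D) (-c/D) (a/D) = mk2 ((a*d - b*c)/D) 0 0 ((a*d - b*c)/D)"
    by (simp add: field_simps) (simp add: diff_divide_distrib)
  then have "matrix_inv (mk2 a b c d) = mk2 (d/D) (-b/D) (-c/D) (a/D)"
    using D by (intro matrix_inv_eqI) (simp add: mat_eq_mk2)
  then show ?thesis
    using D by simp
qed

lemma GL2_mk2 [simp]: "mk2 a b c d \<in> GL2 \<longleftrightarrow> a*d - b*c \<noteq> 0"
  by (simp add: GL2_def)

lemma conj_set_mult:
  fixes g h :: "'a::field mat2"
  assumes "det g \<noteq> 0" "det h \<noteq> 0"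
  shows "conj_set g (conj_set h T) = conj_set (g ** h) T"
  unfolding conj_set_def image_image by (simp add: matrix_inv_mult assms matrix_mul_assoc)

lemma conj_set_matrix_inv:
  fixes g :: "'a::field mat2"
  assumes "det g \<noteq> 0"
  shows "conj_set (matrix_inv g) (conj_set g T) = T"
proof -
  have "matrix_inv (mat 1 :: 'a mat2) = mat 1"
    by (rule matrix_inv_eqI) simp
  then have "conj_set (mat 1) T = T"
    by (simp add: conj_set_def)
  then show ?thesis
    using assms by (simp add: conj_set_mult det_matrix_inv matrix_inv_left)
qed

section \<open>Tori of binary quadratic forms\<close>

definition form_torus :: "'a::field mat2 \<Rightarrow> 'a mat2 set" where
  "form_torus M = {g \<in> GL2. transpose g ** M ** g = mat (det g) ** M}"

lemma torus_eq_form_torus: "torus \<alpha> \<beta> \<gamma> = form_torus (Smat \<alpha> \<beta> \<gamma>)"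
  by (simp add: torus_def form_torus_def)

lemma mat_scalar_commute: "(A::'a::comm_ring_1 mat2) ** mat c = mat c ** A"
  by (cases A rule: mk2_exhaust) (simp add: mat_eq_mk2 algebra_simps)

lemma mult_mat_scalar_left: "(A::'a::comm_ring_1 mat2) ** (mat c ** B) = mat c ** (A ** B)"
  by (simp add: matrix_mul_assoc mat_scalar_commute)

lemma conj_set_form_torus_subset:
  fixes P :: "'a::field mat2"
  assumes P: "det P \<noteq> 0"
  shows "conj_set (matrix_inv P) (form_torus M) \<subseteq> form_torus (transpose P ** M ** P)"
proof
  fix u assume "u \<in> conj_set (matrix_inv P) (form_torus M)"
  then obtain t where t: "t \<in> form_torus M" and u: "u = matrix_inv P ** t ** P"
    by (auto simp: conj_set_def matrix_inv_matrix_inv P)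
  have det_u: "det u = det t"
    using P by (simp add: u det_mul det_matrix_inv)
  have PP: "transpose (matrix_inv P) ** transpose P = mat 1"
    using P by (simp add: matrix_transpose_mul[symmetric] matrix_inv_right)
  have "transpose u ** (transpose P ** M ** P) ** u
      = transpose P ** transpose t ** (transpose (matrix_inv P) ** transpose P) ** M
          ** (P ** matrix_inv P) ** t ** P"
    by (simp add: u matrix_transpose_mul matrix_mul_assoc)
  also have "\<dots> = transpose P ** (transpose t ** M ** t) ** P"
    by (simp add: PP matrix_inv_right P matrix_mul_assoc)
  also have "\<dots> = mat (det u) ** (transpose P ** M ** P)"
    using t by (simp add: form_torus_def det_u mult_mat_scalar_left matrix_mul_assoc[symmetric])
  finally show "u \<in> form_torus (transpose P ** M ** P)"
    using t by (simp add: form_torus_def GL2_def det_u)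
qed

lemma conj_set_form_torus:
  fixes P :: "'a::field mat2"
  assumes P: "det P \<noteq> 0"
  shows "conj_set (matrix_inv P) (form_torus M) = form_torus (transpose P ** M ** P)"
proof
  show "conj_set (matrix_inv P) (form_torus M) \<subseteq> form_torus (transpose P ** M ** P)"
    by (rule conj_set_form_torus_subset[OF P])
  have P': "det (matrix_inv P) \<noteq> 0"
    using P by (simp add: det_matrix_inv)
  have "transpose (matrix_inv P) ** (transpose P ** M ** P) ** matrix_inv P = M"
    using P by (simp add: matrix_mul_assoc matrix_transpose_mul[symmetric] matrix_inv_right)
      (simp add: matrix_mul_assoc[symmetric] matrix_inv_right)
  then have "conj_set P (form_torus (transpose P ** M ** P)) \<subseteq> form_torus M"
    using conj_set_form_torus_subset[OF P', of "transpose P ** M ** P"] P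
    by (simp add: matrix_inv_matrix_inv)
  then have "conj_set (matrix_inv P) (conj_set P (form_torus (transpose P ** M ** P)))
      \<subseteq> conj_set (matrix_inv P) (form_torus M)"
    unfolding conj_set_def by (rule image_mono)
  then show "form_torus (transpose P ** M ** P) \<subseteq> conj_set (matrix_inv P) (form_torus M)"
    by (simp add: conj_set_matrix_inv[OF P])
qed

lemma form_torus_scale:
  fixes M :: "'a::field mat2"
  assumes "c \<noteq> 0"
  shows "form_torus (mat c ** M) = form_torus M"
proof -
  have "mat c ** X = mat c ** Y \<longleftrightarrow> X = Y" for X Y :: "'a mat2"
    using assms by (simp add: matrix_mult_left_cancel mat_eq_mk2)
  moreover have "transpose g ** (mat c ** M) ** g = mat c ** (transpose g ** M ** g)" for g :: "'a mat2"
    by (simp add: mult_mat_scalar_left matrix_mul_assoc[symmetric])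
  moreover have "mat (det g) ** (mat c ** M) = mat c ** (mat (det g) ** M)" for g :: "'a mat2"
    by (cases M rule: mk2_exhaust) (simp add: mat_eq_mk2 algebra_simps)
  ultimately show ?thesis
    by (simp add: form_torus_def)
qed

text \<open>The adjugate \<open>mk2 d (-c) (-b) a\<close> of \<open>transpose g\<close> turns the quadratic condition
  defining the torus into a linear one.\<close>
lemma torus_mk2:
  fixes \<alpha> \<beta> \<gamma> :: "'a::field_char_0"
  shows "mk2 a b c d \<in> torus \<alpha> \<beta> \<gamma> \<longleftrightarrow> a*d - b*c \<noteq> 0 \<and>
     \<alpha>*(a-d) + \<beta>*c = 0 \<and> \<alpha>*b + \<gamma>*c = 0 \<and> \<beta>*b + \<gamma>*(d-a) = 0"
proof (cases "a*d - b*c = 0")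
  case False
  let ?g = "mk2 a b c d" and ?S = "Smat \<alpha> \<beta> \<gamma>"
  have adj: "transpose ?g ** (mk2 d (-c) (-b) a ** ?S) = mat (det ?g) ** ?S"
    by (simp add: Smat_def mat_eq_mk2 algebra_simps)
  have "transpose ?g ** ?S ** ?g = mat (det ?g) ** ?S \<longleftrightarrow> ?S ** ?g = mk2 d (-c) (-b) a ** ?S"
    unfolding adj[symmetric] matrix_mul_assoc[symmetric]
    by (rule matrix_mult_left_cancel) (use False in \<open>simp add: mult.commute\<close>)
  also have "?S ** ?g = mk2 d (-c) (-b) a ** ?S +
      mk2 (\<alpha>*(a-d) + \<beta>*c) (\<alpha>*b + \<gamma>*c) (\<alpha>*b + \<gamma>*c) (\<beta>*b + \<gamma>*(d-a))"
    by (simp add: Smat_def field_simps)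
  also have "\<dots> = mk2 d (-c) (-b) a ** ?S \<longleftrightarrow>
      \<alpha>*(a-d) + \<beta>*c = 0 \<and> \<alpha>*b + \<gamma>*c = 0 \<and> \<beta>*b + \<gamma>*(d-a) = 0"
    by (simp add: zero_eq_mk2)
  finally show ?thesis
    using False by (simp add: torus_def)
qed (simp add: torus_def GL2_def)

lemma torus_subset_GL2: "torus \<alpha> \<beta> \<gamma> \<subseteq> GL2"
  by (auto simp: torus_def)

lemma torus_0_1_mk2:
  fixes \<alpha> :: "'a::field_char_0"
  assumes "\<alpha> \<noteq> 0"
  shows "mk2 a b c d \<in> torus \<alpha> 0 1 \<longleftrightarrow> a*d - b*c \<noteq> 0 \<and> d = a \<and> c = - (\<alpha>*b)"
  using assms by (auto simp: torus_mk2 algebra_simps add_eq_0_iff2)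

lemma torus_0_1_mk2_bottom_row:
  fixes \<alpha> :: "'a::field_char_0"
  assumes "\<alpha> \<noteq> 0" "\<alpha> * s * s + r * r \<noteq> 0"
  shows "mk2 s (- r/\<alpha>) r s \<in> torus \<alpha> 0 1"
  using assms by (simp add: torus_0_1_mk2 field_simps)

lemma torus_0_1_matrix_inv:
  fixes \<alpha> :: "'a::field_char_0"
  assumes "\<alpha> \<noteq> 0" "t \<in> torus \<alpha> 0 1"
  shows "matrix_inv t \<in> torus \<alpha> 0 1"
proof -
  obtain a b c d where t: "t = mk2 a b c d"
    by (rule mk2_exhaust)
  then have "d = a" "c = - (\<alpha>*b)" "a*a + \<alpha>*(b*b) \<noteq> 0"
    using assms by (auto simp: torus_0_1_mk2 algebra_simps add_eq_0_iff2)
  moreover obtain D where D: "a*a + \<alpha>*(b*b) = D"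
    by blast
  ultimately have "matrix_inv t = mk2 (a/D) (- b/D) (\<alpha>*b/D) (a/D)" "D \<noteq> 0"
    by (simp_all add: t matrix_inv_mk2 algebra_simps)
  moreover have "(a/D)*(a/D) - (- b/D)*(\<alpha>*b/D) = 1/D"
    using D \<open>D \<noteq> 0\<close> by (simp add: field_simps)
  ultimately show ?thesis
    using assms(1) by (simp add: torus_0_1_mk2)
qed

lemma conj_set_a_mat_torus:
  fixes y \<alpha> :: "'a::field_char_0"
  assumes y: "y \<noteq> 0"
  shows "conj_set (a_mat y) (torus \<alpha> 0 1) = torus (\<alpha> / (y*y)) 0 1"
proof -
  have "a_mat y = matrix_inv (a_mat (1/y))"
    using y by (simp add: a_mat_def matrix_inv_mk2)
  moreover have "transpose (a_mat (1/y)) ** Smat \<alpha> 0 1 ** a_mat (1/y) = Smat (\<alpha> / (y*y)) 0 1"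
    by (simp add: a_mat_def Smat_def)
  ultimately show ?thesis
    using conj_set_form_torus[of "a_mat (1/y)" "Smat \<alpha> 0 1"] y
    by (simp add: torus_eq_form_torus a_mat_def)
qed

text \<open>Completing the square in the form \<open>\<alpha>x\<^sup>2 + \<beta>xy + \<gamma>y\<^sup>2\<close>.\<close>
lemma conj_set_torus_diagonal:
  fixes \<alpha> \<beta> \<gamma> t :: "'a::field_char_0"
  assumes \<gamma>: "\<gamma> \<noteq> 0" and t: "t \<noteq> 0"
  defines "P \<equiv> mk2 t 0 (- (\<beta>*t)/(2*\<gamma>)) 1"
  shows "conj_set (matrix_inv P) (torus \<alpha> \<beta> \<gamma>) = torus (- (t*t)*(\<beta>\<^sup>2 - 4*\<alpha>*\<gamma>)/(4*(\<gamma>*\<gamma>))) 0 1"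
    and "matrix_inv P \<in> GL2"
proof -
  have "transpose P ** Smat \<alpha> \<beta> \<gamma> ** P = mat \<gamma> ** Smat (- (t*t)*(\<beta>\<^sup>2 - 4*\<alpha>*\<gamma>)/(4*(\<gamma>*\<gamma>))) 0 1"
    using \<gamma> by (simp add: P_def Smat_def mat_eq_mk2 field_simps power2_eq_square)
  moreover have "det P \<noteq> 0"
    using t by (simp add: P_def)
  ultimately show "conj_set (matrix_inv P) (torus \<alpha> \<beta> \<gamma>) = torus (- (t*t)*(\<beta>\<^sup>2 - 4*\<alpha>*\<gamma>)/(4*(\<gamma>*\<gamma>))) 0 1"
    using \<gamma> by (simp add: torus_eq_form_torus conj_set_form_torus form_torus_scale)
  show "matrix_inv P \<in> GL2"
    using \<open>det P \<noteq> 0\<close> by (simp add: GL2_def det_matrix_inv)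
qed

lemma mult_matrix_inv_in_B1:
  fixes p q r s a b :: "'a::field"
  assumes "mk2 p q r s \<in> GL2" "mk2 a b r s \<in> GL2"
  shows "mk2 p q r s ** matrix_inv (mk2 a b r s) \<in> B1"
proof -
  obtain D where D: "a * s - b * r = D" "D \<noteq> 0"
    using assms(2) by simp
  have "mk2 p q r s ** matrix_inv (mk2 a b r s) = mk2 ((p * s - q * r)/D) ((a*q - b*p)/D) 0 1"
    using D by (simp add: matrix_inv_mk2 field_simps)
  then show ?thesis
    using assms D by (auto simp: B1_def)
qed

lemma B1_subset_GL2: "B1 \<subseteq> GL2"
  by (auto simp: B1_def)

lemma B1_matrix_inv: "b \<in> B1 \<Longrightarrow> matrix_inv b \<in> B1"
  by (auto simp: B1_def matrix_inv_mk2)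

lemma mult_matrix_inv_mult: "t \<in> GL2 \<Longrightarrow> g ** matrix_inv t ** t = (g::'a::field mat2)"
  by (simp add: GL2_def matrix_mul_assoc[symmetric] matrix_inv_left)

lemma set_prod_swap:
  fixes A B C :: "'a::field mat2 set"
  assumes C: "C = set_prod A B" and GL2: "A \<subseteq> GL2" "B \<subseteq> GL2"
    and inv: "\<And>g. g \<in> C \<Longrightarrow> matrix_inv g \<in> C" "\<And>a. a \<in> A \<Longrightarrow> matrix_inv a \<in> A"
      "\<And>b. b \<in> B \<Longrightarrow> matrix_inv b \<in> B"
  shows "C = set_prod B A"
proof
  have det: "det a \<noteq> 0" "det b \<noteq> 0" if "a \<in> A" "b \<in> B" for a b
    using that GL2 by (auto simp: GL2_def)
  show "C \<subseteq> set_prod B A"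
  proof
    fix c assume "c \<in> C"
    then have "matrix_inv c \<in> set_prod A B"
      using inv(1) C by blast
    then obtain a b where ab: "a \<in> A" "b \<in> B" "matrix_inv c = a ** b"
      by (auto simp: set_prod_def)
    have "det c \<noteq> 0"
      using \<open>c \<in> C\<close> C det by (auto simp: set_prod_def det_mul)
    then have "c = matrix_inv b ** matrix_inv a"
      using ab det by (metis matrix_inv_matrix_inv matrix_inv_mult)
    then show "c \<in> set_prod B A"
      using ab inv unfolding set_prod_def by blast
  qed
  show "set_prod B A \<subseteq> C"
  proof
    fix c assume "c \<in> set_prod B A"
    then obtain a b where ab: "a \<in> A" "b \<in> B" "c = b ** a"
      by (auto simp: set_prod_def)
    have "matrix_inv a ** matrix_inv b \<in> C"
      using ab inv(2,3) C unfolding set_prod_def by blast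
    moreover have "matrix_inv (matrix_inv a ** matrix_inv b) = c"
      using ab det by (simp add: matrix_inv_mult det_matrix_inv matrix_inv_matrix_inv)
    ultimately show "c \<in> C"
      using inv(1) by metis
  qed
qed

lemma nonsquare_norm_form_nonzero:
  fixes \<alpha> s r :: "'a::field"
  assumes "\<nexists>t. - \<alpha> = t * t" "(s, r) \<noteq> (0, 0)"
  shows "\<alpha> * s * s + r * r \<noteq> 0"
proof
  assume "\<alpha> * s * s + r * r = 0"
  moreover have "s \<noteq> 0"
    using assms calculation by auto
  ultimately have "- \<alpha> = (r / s) * (r / s)"
    by (simp add: field_simps add_eq_0_iff2 add.commute)
  then show False
    using assms(1) by blast
qed

lemma GL2_eq_B1_torus:
  fixes \<alpha> :: "'a::field_char_0"
  assumes \<alpha>: "\<alpha> \<noteq> 0" "\<nexists>t. - \<alpha> = t * t"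
  shows "GL2 = set_prod B1 (torus \<alpha> 0 1)"
proof
  show "set_prod B1 (torus \<alpha> 0 1) \<subseteq> GL2"
    using B1_subset_GL2 torus_subset_GL2 by (fastforce simp: set_prod_def GL2_def det_mul)
  show "GL2 \<subseteq> set_prod B1 (torus \<alpha> 0 1)"
  proof
    fix g :: "'a mat2" assume g: "g \<in> GL2"
    obtain p q r s where g_eq: "g = mk2 p q r s"
      by (rule mk2_exhaust)
    let ?t = "mk2 s (- r/\<alpha>) r s"
    have "(s, r) \<noteq> (0, 0)"
      using g by (auto simp: g_eq)
    then have t: "?t \<in> torus \<alpha> 0 1"
      using torus_0_1_mk2_bottom_row \<alpha> nonsquare_norm_form_nonzero by blast
    moreover have "?t \<in> GL2"
      using t torus_subset_GL2 by blast
    ultimately have "g ** matrix_inv ?t \<in> B1"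
      using g unfolding g_eq by (intro mult_matrix_inv_in_B1)
    moreover have "g = g ** matrix_inv ?t ** ?t"
      using mult_matrix_inv_mult[symmetric, OF \<open>?t \<in> GL2\<close>] .
    ultimately show "g \<in> set_prod B1 (torus \<alpha> 0 1)"
      using t unfolding set_prod_def by blast
  qed
qed

section \<open>Discrete valuations\<close>

definition val_ge :: "('a::field \<Rightarrow> int) \<Rightarrow> 'a \<Rightarrow> int \<Rightarrow> bool" where
  "val_ge v x n \<longleftrightarrow> x = 0 \<or> n \<le> v x"

lemma int_ring_eq: "int_ring v = {x. val_ge v x 0}"
  by (auto simp: int_ring_def val_ge_def)

lemma max_ideal_eq: "max_ideal v = {x. val_ge v x 1}"
  by (auto simp: max_ideal_def val_ge_def)

lemma int_units_iff: "x \<in> int_units v \<longleftrightarrow> x \<noteq> 0 \<and> v x = 0"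
  by (simp add: int_units_def)

lemma int_units_iff_val_ge: "x \<in> int_units v \<longleftrightarrow> val_ge v x 0 \<and> \<not> val_ge v x 1"
  by (auto simp: int_units_def val_ge_def)

definition residually_square :: "('a::field \<Rightarrow> int) \<Rightarrow> 'a \<Rightarrow> bool" where
  "residually_square v x \<longleftrightarrow> (\<exists>t. val_ge v (x - t * t) 1)"

locale valued_field =
  fixes v :: "'a::field \<Rightarrow> int"
  assumes discrete_valuation: "discrete_valuation v"
begin

lemma val_mult: "x \<noteq> 0 \<Longrightarrow> y \<noteq> 0 \<Longrightarrow> v (x * y) = v x + v y"
  using discrete_valuation unfolding discrete_valuation_def by blast

lemma val_add: "x \<noteq> 0 \<Longrightarrow> y \<noteq> 0 \<Longrightarrow> x + y \<noteq> 0 \<Longrightarrow> min (v x) (v y) \<le> v (x + y)"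
  using discrete_valuation unfolding discrete_valuation_def by blast

lemma val_surj: "\<exists>x. x \<noteq> 0 \<and> v x = n"
  using discrete_valuation unfolding discrete_valuation_def by blast

lemma val_one [simp]: "v 1 = 0"
  using val_mult[of 1 1] by simp

lemma val_minus [simp]: "v (- x) = v x"
proof (cases "x = 0")
  case False
  have "v (-1) + v (-1) = 0"
    using val_mult[of "-1" "-1"] by simp
  then show ?thesis
    using val_mult[of "-1" x] False by simp
qed simp

lemma val_divide: "x \<noteq> 0 \<Longrightarrow> y \<noteq> 0 \<Longrightarrow> v (x / y) = v x - v y"
  using val_mult[of "x / y" y] by simp

lemma val_square: "x \<noteq> 0 \<Longrightarrow> v (x * x) = 2 * v x"
  by (simp add: val_mult)

lemma val_ge_zero [simp]: "val_ge v 0 n"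
  by (simp add: val_ge_def)

lemma val_ge_minus [simp]: "val_ge v (- x) n \<longleftrightarrow> val_ge v x n"
  by (simp add: val_ge_def)

lemma val_ge_commute: "val_ge v (x - y) n \<longleftrightarrow> val_ge v (y - x) n"
  using val_ge_minus[of "x - y"] by simp

lemma val_ge_add: "val_ge v x n \<Longrightarrow> val_ge v y n \<Longrightarrow> val_ge v (x + y) n"
  unfolding val_ge_def using val_add[of x y] by (cases "x = 0"; cases "y = 0"; cases "x + y = 0") auto

lemma val_ge_diff: "val_ge v x n \<Longrightarrow> val_ge v y n \<Longrightarrow> val_ge v (x - y) n"
  using val_ge_add[of x n "- y"] by simp

lemma val_ge_trans: "val_ge v (x - y) n \<Longrightarrow> val_ge v (y - z) n \<Longrightarrow> val_ge v (x - z) n"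
  using val_ge_add[of "x - y" n "y - z"] by simp

lemma val_ge_mult: "val_ge v x n \<Longrightarrow> val_ge v y m \<Longrightarrow> val_ge v (x * y) (n + m)"
  unfolding val_ge_def using val_mult[of x y] by (cases "x = 0"; cases "y = 0") auto

lemma val_ge_mult_int_ring: "val_ge v x n \<Longrightarrow> val_ge v y 0 \<Longrightarrow> val_ge v (x * y) n"
  using val_ge_mult[of x n y 0] by simp

lemma val_ge_mono: "val_ge v x n \<Longrightarrow> m \<le> n \<Longrightarrow> val_ge v x m"
  unfolding val_ge_def by auto

lemma eq_zero_if_val_ge_all: "(\<And>n. val_ge v x n) \<Longrightarrow> x = 0"
  unfolding val_ge_def by (metis less_add_one not_le)

lemma val_ge_one_mult_cases:
  "val_ge v x 0 \<Longrightarrow> val_ge v y 0 \<Longrightarrow> val_ge v (x * y) 1 \<Longrightarrow> val_ge v x 1 \<or> val_ge v y 1"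
  unfolding val_ge_def using val_mult[of x y] by (cases "x = 0"; cases "y = 0") auto

lemma int_units_mult: "x \<in> int_units v \<Longrightarrow> y \<in> int_units v \<Longrightarrow> x * y \<in> int_units v"
  by (simp add: int_units_iff val_mult)

lemma int_units_divide: "x \<in> int_units v \<Longrightarrow> y \<in> int_units v \<Longrightarrow> x / y \<in> int_units v"
  by (simp add: int_units_iff val_divide)

lemma int_units_minus [simp]: "- x \<in> int_units v \<longleftrightarrow> x \<in> int_units v"
  by (simp add: int_units_iff)

lemma int_units_square_iff: "x * x \<in> int_units v \<longleftrightarrow> x \<in> int_units v"
  by (auto simp: int_units_iff val_square)

lemma int_units_val_ge: "x \<in> int_units v \<Longrightarrow> val_ge v x 0"
  by (simp add: int_units_iff val_ge_def)

lemma val_ge_divide_unit: "y \<in> int_units v \<Longrightarrow> val_ge v (x / y) n \<longleftrightarrow> val_ge v x n"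
  unfolding val_ge_def int_units_iff by (cases "x = 0") (auto simp: val_divide)

lemma int_units_add_max_ideal: "x \<in> int_units v \<Longrightarrow> val_ge v e 1 \<Longrightarrow> x + e \<in> int_units v"
proof -
  assume x: "x \<in> int_units v" and e: "val_ge v e 1"
  have "val_ge v (x + e) 0"
    using val_ge_add[OF int_units_val_ge[OF x] val_ge_mono[OF e]] by simp
  moreover have "\<not> val_ge v (x + e) 1"
    using val_ge_diff[of "x + e" 1 e] e x by (auto simp: int_units_iff_val_ge)
  ultimately show ?thesis
    by (simp add: int_units_iff_val_ge)
qed

lemma int_units_cong: "x \<in> int_units v \<Longrightarrow> val_ge v (x - y) 1 \<Longrightarrow> y \<in> int_units v"
  using int_units_add_max_ideal[of x "y - x"] val_ge_commute[of x y] by simp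

lemma residually_square_cong:
  "residually_square v x \<Longrightarrow> val_ge v (x - y) 1 \<Longrightarrow> residually_square v y"
  unfolding residually_square_def by (metis val_ge_commute val_ge_trans)

lemma GL2_O_mk2:
  "mk2 a b c d \<in> GL2_O v \<longleftrightarrow>
     val_ge v a 0 \<and> val_ge v b 0 \<and> val_ge v c 0 \<and> val_ge v d 0 \<and> a*d - b*c \<in> int_units v"
  by (simp add: GL2_O_def int_ring_eq forall_2)

lemma GL2_O_subset_GL2: "GL2_O v \<subseteq> GL2"
  by (auto simp: GL2_O_def GL2_def int_units_iff)

lemma GL2_O_mult: "g \<in> GL2_O v \<Longrightarrow> h \<in> GL2_O v \<Longrightarrow> g ** h \<in> GL2_O v"
proof -
  assume g: "g \<in> GL2_O v" and h: "h \<in> GL2_O v"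
  obtain a b c d a' b' c' d' where gh: "g = mk2 a b c d" "h = mk2 a' b' c' d'"
    by (meson mk2_exhaust)
  have "(a*a' + b*c') * (c*b' + d*d') - (a*b' + b*d') * (c*a' + d*c') = (a*d - b*c) * (a'*d' - b'*c')"
    by (simp add: algebra_simps)
  then show ?thesis
    using g h int_units_mult
    by (auto simp: gh GL2_O_mk2 intro!: val_ge_add val_ge_mult_int_ring)
qed

lemma GL2_O_matrix_inv: "g \<in> GL2_O v \<Longrightarrow> matrix_inv g \<in> GL2_O v"
proof -
  assume g: "g \<in> GL2_O v"
  obtain a b c d where g_eq: "g = mk2 a b c d"
    by (rule mk2_exhaust)
  then have D: "a*d - b*c \<in> int_units v"
    using g by (simp add: GL2_O_mk2)
  then have "det (matrix_inv g) \<in> int_units v"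
    using int_units_divide[OF _ D, of 1] by (simp add: g_eq det_matrix_inv int_units_iff divide_inverse)
  then show ?thesis
    using g D by (simp add: g_eq matrix_inv_mk2 int_units_iff GL2_O_mk2 val_ge_divide_unit)
qed

lemma GL2_O_bottom_row_primitive:
  assumes "mk2 p q r s \<in> GL2_O v"
  shows "\<not> (val_ge v r 1 \<and> val_ge v s 1)"
proof
  assume "val_ge v r 1 \<and> val_ge v s 1"
  then have "val_ge v (s * p - r * q) 1"
    using assms by (auto simp: GL2_O_mk2 intro!: val_ge_diff val_ge_mult_int_ring)
  then have "val_ge v (p * s - q * r) 1"
    by (simp add: mult.commute)
  then show False
    using assms by (simp add: GL2_O_mk2 int_units_iff_val_ge)
qed

lemma exists_square_scaling_unit:
  assumes "x \<noteq> 0" "even (v x)"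
  shows "\<exists>t. t \<noteq> 0 \<and> t * t * x \<in> int_units v"
proof -
  obtain k where k: "v x = 2 * k"
    using assms(2) by (auto elim: evenE)
  obtain t where "t \<noteq> 0" "v t = - k"
    using val_surj by blast
  then show ?thesis
    using assms(1) k by (auto simp: int_units_iff val_mult)
qed

end

section \<open>Hensel's lemma for square roots\<close>

context valued_field
begin

lemma newton_sqrt_step:
  assumes two: "2 \<in> int_units v" and y: "y \<in> int_units v"
    and e: "val_ge v (y * y - w) n" and n: "1 \<le> n"
  defines "y' \<equiv> (y + w / y) / 2"
  shows "y' \<in> int_units v" "val_ge v (y' - y) n" "val_ge v (y' * y' - w) (2 * n)"
proof -
  have nonzero: "y \<noteq> 0" "(2::'a) \<noteq> 0"
    using two y by (simp_all add: int_units_iff)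
  then have "(4::'a) \<noteq> 0"
    by (metis mult_eq_0_iff numeral_Bit0_eq_double one_add_one)
  with nonzero have diff: "y' - y = - ((y * y - w) / (2 * y))"
    and sq: "y' * y' - w = (y * y - w) * (y * y - w) / ((2 * y) * (2 * y))"
    by (simp_all add: y'_def field_simps)
  have unit_2y: "2 * y \<in> int_units v"
    using int_units_mult[OF two y] .
  show "val_ge v (y' - y) n"
    using e by (simp add: diff val_ge_divide_unit[OF unit_2y])
  then have "y + (y' - y) \<in> int_units v"
    using int_units_add_max_ideal[OF y] val_ge_mono n by blast
  then show "y' \<in> int_units v"
    by simp
  show "val_ge v (y' * y' - w) (2 * n)"
    using val_ge_mult[OF e e] int_units_mult[OF unit_2y unit_2y] by (simp add: sq val_ge_divide_unit)
qed

lemma v_cauchy_if_val_ge_diff: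
  assumes succ: "\<And>n. val_ge v (x (Suc n) - x n) (int n + 1)"
  shows "v_cauchy v x"
proof -
  have tail: "val_ge v (x m - x n) (int n + 1)" if "n \<le> m" for m n
    using that
  proof (induction m rule: dec_induct)
    case (step m)
    have "val_ge v (x (Suc m) - x m) (int n + 1)"
      using val_ge_mono[OF succ[of m]] step.hyps(1) by simp
    then show ?case
      using val_ge_add[OF _ step.IH] by fastforce
  qed simp
  show ?thesis
    unfolding v_cauchy_def
  proof (intro allI exI impI)
    fix N :: int and m n
    assume "nat N \<le> m" "nat N \<le> n"
    then have "val_ge v (x m - x n) N"
      using tail[of n m] tail[of m n] val_ge_commute[of "x m"] by (cases "n \<le> m") (auto intro: val_ge_mono)
    then show "x m = x n \<or> N \<le> v (x m - x n)"
      by (simp add: val_ge_def)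
  qed
qed

lemma square_of_limit:
  assumes L: "v_converges v x L" and int: "\<And>n. val_ge v (x n) 0"
    and approx: "\<And>n. val_ge v (x n * x n - w) (int n + 1)"
  shows "L * L = w"
proof (rule eq_zero_if_val_ge_all[THEN eq_iff_diff_eq_0[THEN iffD2]])
  fix N :: int
  obtain M where M: "\<forall>n\<ge>M. x n = L \<or> max N 0 \<le> v (x n - L)"
    using L unfolding v_converges_def by blast
  define n where "n = max M (nat N)"
  have "val_ge v (x n - L) (max N 0)"
    using M by (simp add: n_def val_ge_def)
  then have close: "val_ge v (L - x n) (max N 0)"
    using val_ge_commute by blast
  have "val_ge v ((L - x n) + x n + x n) 0"
    using val_ge_add val_ge_mono[OF close] int by (metis max.cobounded2)
  then have "val_ge v (L + x n) 0"
    by (simp add: algebra_simps)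
  then have "val_ge v ((L - x n) * (L + x n)) (max N 0)"
    using val_ge_mult[OF close] by fastforce
  moreover have "val_ge v (x n * x n - w) N"
    using val_ge_mono[OF approx] by (simp add: n_def)
  ultimately have "val_ge v ((L - x n) * (L + x n) + (x n * x n - w)) N"
    by (meson max.cobounded1 val_ge_add val_ge_mono)
  then show "val_ge v (L * L - w) N"
    by (simp add: algebra_simps)
qed

end

locale complete_valued_field = valued_field +
  assumes complete: "\<And>f. v_cauchy v f \<Longrightarrow> \<exists>L. v_converges v f L"
begin

text \<open>The root is the limit of Newton's iteration \<open>y \<mapsto> (y + w/y)/2\<close> started at \<open>s\<close>.\<close>
lemma square_if_square_mod_max_ideal:
  assumes two: "2 \<in> int_units v" and w: "w \<in> int_units v" and s: "val_ge v (w - s * s) 1"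
  shows "\<exists>r. w = r * r"
proof -
  define x where "x = rec_nat s (\<lambda>_ y. (y + w / y) / 2)"
  have x_Suc: "x (Suc n) = (x n + w / x n) / 2" for n
    by (simp add: x_def)
  have approx: "x n \<in> int_units v \<and> val_ge v (x n * x n - w) (int n + 1)" for n
  proof (induction n)
    case 0
    have "val_ge v (s * s - w) 1"
      using s val_ge_commute by blast
    moreover have "w + (s * s - w) \<in> int_units v"
      using int_units_add_max_ideal[OF w] calculation .
    ultimately show ?case
      by (simp add: x_def int_units_square_iff)
  next
    case (Suc n)
    then show ?case
      using newton_sqrt_step[OF two, of "x n" w "int n + 1"] val_ge_mono
      by (fastforce simp: x_Suc)
  qed
  have "val_ge v (x (Suc n) - x n) (int n + 1)" for n
    using newton_sqrt_step(2)[OF two, of "x n" w "int n + 1"] approx by (simp add: x_Suc)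
  then obtain L where "v_converges v x L"
    using complete v_cauchy_if_val_ge_diff by blast
  then have "L * L = w"
    using square_of_limit approx int_units_val_ge by blast
  then show ?thesis
    by blast
qed

end

section \<open>Squares in the residue field\<close>

lemma even_card_if_involution:
  assumes "finite A" "\<And>x. x \<in> A \<Longrightarrow> h x \<in> A \<and> h (h x) = x \<and> h x \<noteq> x"
  shows "even (card A)"
  using assms
proof (induction "card A" arbitrary: A rule: less_induct)
  case less
  show ?case
  proof (cases "A = {}")
    case False
    then obtain x where x: "x \<in> A"
      by blast
    have hx: "h x \<in> A" "h x \<noteq> x"
      using less.prems x by auto
    let ?B = "A - {x, h x}"
    have "card {x, h x} \<le> card A"
      using less.prems(1) x hx by (intro card_mono) auto
    then have card_A: "card A = card ?B + 2"
      using less.prems(1) x hx by (simp add: card_Diff_subset)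
    have "h y \<in> ?B \<and> h (h y) = y \<and> h y \<noteq> y" if "y \<in> ?B" for y
      using that less.prems(2)[of y] less.prems(2)[of x] x by auto
    then have "even (card ?B)"
      using less.prems(1) card_A by (intro less.hyps) auto
    then show ?thesis
      using card_A by simp
  qed simp
qed

locale residue_system = valued_field +
  fixes R :: "'a::field set"
  assumes finite_R: "finite R"
    and R_int: "\<And>r. r \<in> R \<Longrightarrow> val_ge v r 0"
    and R_covers: "\<And>x. val_ge v x 0 \<Longrightarrow> \<exists>r\<in>R. val_ge v (x - r) 1"
    and R_distinct: "\<And>r r'. r \<in> R \<Longrightarrow> r' \<in> R \<Longrightarrow> val_ge v (r - r') 1 \<Longrightarrow> r = r'"
begin

definition rep :: "'a \<Rightarrow> 'a" where
  "rep x = (SOME r. r \<in> R \<and> val_ge v (x - r) 1)"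

lemma rep_spec: "val_ge v x 0 \<Longrightarrow> rep x \<in> R \<and> val_ge v (x - rep x) 1"
  unfolding rep_def using R_covers[of x] by (metis (mono_tags, lifting) someI_ex)

lemma rep_eqI: "r \<in> R \<Longrightarrow> val_ge v x 0 \<Longrightarrow> val_ge v (x - r) 1 \<Longrightarrow> rep x = r"
  using rep_spec[of x] R_distinct[of "rep x" r] val_ge_trans[of "rep x" x 1 r] val_ge_commute by blast

lemma even_card_if_two_in_max_ideal:
  assumes two: "val_ge v 2 1"
  shows "even (card R)"
proof (rule even_card_if_involution[OF finite_R, of "\<lambda>r. rep (r + 1)"])
  fix r assume r: "r \<in> R"
  have one: "val_ge v 1 0" "\<not> val_ge v 1 1"
    by (simp_all add: val_ge_def)
  have int: "val_ge v (s + 1) 0" if "s \<in> R" for s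
    using val_ge_add[OF R_int[OF that] one(1)] .
  have hr: "rep (r + 1) \<in> R" "val_ge v (r + 1 - rep (r + 1)) 1"
    using rep_spec[OF int[OF r]] by auto
  have "val_ge v (rep (r + 1) + 1 - r) 1"
    using val_ge_add[OF val_ge_commute[THEN iffD1, OF hr(2)] two] by (simp add: algebra_simps)
  then have "rep (rep (r + 1) + 1) = r"
    using rep_eqI[OF r int[OF hr(1)]] by simp
  moreover have "rep (r + 1) \<noteq> r"
    using hr(2) one(2) by auto
  ultimately show "rep (r + 1) \<in> R \<and> rep (rep (r + 1) + 1) = r \<and> rep (r + 1) \<noteq> r"
    using hr(1) by blast
qed

definition unit_reps :: "'a set" where
  "unit_reps = R \<inter> int_units v"

definition square_reps :: "'a set" where
  "square_reps = {r \<in> unit_reps. residually_square v r}"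

lemma rep_unit: "x \<in> int_units v \<Longrightarrow> rep x \<in> unit_reps"
  using rep_spec[OF int_units_val_ge] int_units_cong unfolding unit_reps_def by blast

lemma finite_unit_reps: "finite unit_reps"
  using finite_R by (simp add: unit_reps_def)

lemma square_reps_subset: "square_reps \<subseteq> unit_reps"
  by (auto simp: square_reps_def)

text \<open>Squaring is at most two-to-one on residue classes, since \<open>r\<^sup>2 \<equiv> s\<^sup>2\<close> forces \<open>r \<equiv> \<plusminus>s\<close>.\<close>
lemma card_unit_reps_le: "card unit_reps \<le> 2 * card square_reps"
proof -
  define sq where "sq r = rep (r * r)" for r
  have sq: "sq r \<in> square_reps \<and> val_ge v (r * r - sq r) 1" if "r \<in> unit_reps" for r
  proof -
    have "r * r \<in> int_units v"
      using that int_units_mult by (simp add: unit_reps_def)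
    then have "sq r \<in> unit_reps" "val_ge v (r * r - sq r) 1"
      using rep_unit rep_spec[OF int_units_val_ge] by (auto simp: sq_def)
    then show ?thesis
      using val_ge_commute by (auto simp: square_reps_def residually_square_def)
  qed
  have fibre: "card {r \<in> unit_reps. sq r = c} \<le> 2" for c
  proof (cases "{r \<in> unit_reps. sq r = c} = {}")
    case False
    then obtain r' where r': "r' \<in> unit_reps" "sq r' = c"
      by blast
    have int: "val_ge v r 0" if "r \<in> unit_reps" for r
      using that R_int by (simp add: unit_reps_def)
    have "{r \<in> unit_reps. sq r = c} \<subseteq> {r', rep (- r')}"
    proof
      fix r assume r: "r \<in> {r \<in> unit_reps. sq r = c}"
      have "val_ge v ((r * r - sq r) - (r' * r' - sq r')) 1"
        using val_ge_diff sq r r' by blast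
      then have "val_ge v ((r - r') * (r + r')) 1"
        using r r' by (simp add: algebra_simps)
      moreover have "val_ge v (r - r') 0" "val_ge v (r + r') 0"
        using r r' int val_ge_diff val_ge_add by auto
      ultimately consider "val_ge v (r - r') 1" | "val_ge v (- r' - r) 1"
        using val_ge_one_mult_cases val_ge_commute[of "- r'" r] by fastforce
      then show "r \<in> {r', rep (- r')}"
      proof cases
        case 1
        then show ?thesis
          using R_distinct r r' by (simp add: unit_reps_def)
      next
        case 2
        then show ?thesis
          using rep_eqI[of r "- r'"] r r' int by (simp add: unit_reps_def)
      qed
    qed
    then have "card {r \<in> unit_reps. sq r = c} \<le> card {r', rep (- r')}"
      by (rule card_mono[rotated]) simp
    also have "\<dots> \<le> 2"
      by (simp add: card_insert_if)
    finally show ?thesis .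
  next
    case True
    then show ?thesis
      by (simp only: card.empty)
  qed
  have "unit_reps = (\<Union>c\<in>square_reps. {r \<in> unit_reps. sq r = c})"
    using sq by blast
  then have "card unit_reps \<le> (\<Sum>c\<in>square_reps. card {r \<in> unit_reps. sq r = c})"
    using card_UN_le[OF finite_subset[OF square_reps_subset finite_unit_reps],
        of "\<lambda>c. {r \<in> unit_reps. sq r = c}"] by argo
  also have "\<dots> \<le> 2 * card square_reps"
    using sum_mono[of square_reps "\<lambda>c. card {r \<in> unit_reps. sq r = c}" "\<lambda>_. 2"] fibre
    by (simp add: mult.commute)
  finally show ?thesis .
qed

lemma mult_nonsquare_maps_onto_nonsquares:
  assumes a: "a \<in> int_units v" "\<not> residually_square v a"
  shows "(\<lambda>r. rep (a * r)) ` square_reps = unit_reps - square_reps"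
    and "inj_on (\<lambda>r. rep (a * r)) unit_reps"
proof -
  define f where "f r = rep (a * r)" for r
  have f: "f r \<in> unit_reps \<and> val_ge v (a * r - f r) 1" if "r \<in> unit_reps" for r
    using that rep_unit[of "a * r"] rep_spec[of "a * r"] int_units_mult[OF a(1)] int_units_val_ge
    by (auto simp: f_def unit_reps_def)
  show inj: "inj_on (\<lambda>r. rep (a * r)) unit_reps"
    unfolding f_def[symmetric]
  proof (rule inj_onI)
    fix r r' assume r: "r \<in> unit_reps" "r' \<in> unit_reps" "f r = f r'"
    have "val_ge v ((a * r - f r) - (a * r' - f r')) 1"
      using val_ge_diff f r by blast
    then have "val_ge v (a * (r - r')) 1"
      using r(3) by (simp add: algebra_simps)
    moreover have "val_ge v (r - r') 0"
      using r R_int val_ge_diff by (auto simp: unit_reps_def)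
    ultimately have "val_ge v (r - r') 1"
      using val_ge_one_mult_cases a int_units_val_ge by (auto simp: int_units_iff_val_ge)
    then show "r = r'"
      using r R_distinct by (auto simp: unit_reps_def)
  qed
  have "f r \<notin> square_reps" if r: "r \<in> square_reps" for r
  proof
    assume "f r \<in> square_reps"
    then obtain s where s: "val_ge v (f r - s * s) 1"
      by (auto simp: square_reps_def residually_square_def)
    obtain t where t: "val_ge v (r - t * t) 1"
      using r by (auto simp: square_reps_def residually_square_def)
    have "t * t \<in> int_units v"
      using r t int_units_cong by (auto simp: square_reps_def unit_reps_def)
    then have t_unit: "t \<in> int_units v"
      by (simp add: int_units_square_iff)
    have "val_ge v (a * (r - t * t)) 1"
      using val_ge_mult[OF t int_units_val_ge[OF a(1)]] by (simp add: mult.commute)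
    then have "val_ge v (a * (t * t) - s * s) 1"
      using val_ge_add[OF val_ge_diff[OF f[THEN conjunct2] _] s, of r "a * (r - t * t)"] r
      by (simp add: square_reps_def algebra_simps)
    moreover have "a - (s / t) * (s / t) = (a * (t * t) - s * s) / (t * t)"
      using t_unit by (simp add: int_units_iff field_simps)
    ultimately have "val_ge v (a - (s / t) * (s / t)) 1"
      using val_ge_divide_unit[OF int_units_mult[OF t_unit t_unit]] by simp
    then show False
      using a(2) unfolding residually_square_def by blast
  qed
  then have "f ` square_reps \<subseteq> unit_reps - square_reps"
    using f square_reps_subset by blast
  moreover have "card (unit_reps - square_reps) \<le> card (f ` square_reps)"
    using card_unit_reps_le card_image[OF inj_on_subset[OF inj square_reps_subset]]
      card_Diff_subset[OF finite_subset[OF square_reps_subset finite_unit_reps] square_reps_subset]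
    by (simp add: f_def)
  ultimately show "(\<lambda>r. rep (a * r)) ` square_reps = unit_reps - square_reps"
    unfolding f_def using finite_unit_reps by (intro card_seteq) auto
qed

lemma residually_square_mult:
  assumes a: "a \<in> int_units v" "\<not> residually_square v a"
    and b: "b \<in> int_units v" "\<not> residually_square v b"
  shows "residually_square v (a * b)"
proof -
  define f where "f r = rep (a * r)" for r
  have b_int: "val_ge v b 0"
    using int_units_val_ge[OF b(1)] .
  have rb: "rep b \<in> unit_reps" "val_ge v (rep b - b) 1"
    using rep_unit[OF b(1)] rep_spec[OF b_int] val_ge_commute by auto
  have "rep b \<notin> square_reps"
    using b(2) rb(2) residually_square_cong by (auto simp: square_reps_def)
  then have "f (rep b) \<notin> f ` square_reps"
    using inj_onD[OF mult_nonsquare_maps_onto_nonsquares(2)[OF a]] rb(1) square_reps_subset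
    by (auto simp: f_def)
  moreover have ab: "a * rep b \<in> int_units v"
    using int_units_mult[OF a(1)] rb(1) by (simp add: unit_reps_def)
  ultimately have "f (rep b) \<in> square_reps"
    using mult_nonsquare_maps_onto_nonsquares(1)[OF a] rep_unit[OF ab] by (auto simp: f_def)
  then have "residually_square v (f (rep b))"
    by (simp add: square_reps_def)
  moreover have "val_ge v (f (rep b) - a * rep b) 1"
    using rep_spec[OF int_units_val_ge[OF ab]] val_ge_commute by (auto simp: f_def)
  moreover have "val_ge v (a * rep b - a * b) 1"
    using val_ge_mult[OF int_units_val_ge[OF a(1)] rb(2)] by (simp add: algebra_simps)
  ultimately show ?thesis
    using residually_square_cong val_ge_trans by blast
qed

end

lemma (in valued_field) residue_system_exists:
  assumes "finite (residue_field v)"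
  shows "\<exists>R. residue_system v R \<and> card R = card (residue_field v)"
proof -
  define cls where "cls x = {y. val_ge v y 0 \<and> val_ge v (y - x) 1}" for x
  have residue_field_eq: "residue_field v = cls ` {x. val_ge v x 0}"
    unfolding residue_field_def int_ring_eq max_ideal_eq cls_def by auto
  define choice where "choice C = (SOME x. val_ge v x 0 \<and> C = cls x)" for C
  have choice_spec: "val_ge v (choice C) 0 \<and> cls (choice C) = C" if "C \<in> residue_field v" for C
    using someI_ex[of "\<lambda>x. val_ge v x 0 \<and> C = cls x"] that residue_field_eq
    by (auto simp: choice_def)
  have cls_eq: "cls x = cls y" if "val_ge v (x - y) 1" for x y
    unfolding cls_def using that val_ge_trans val_ge_commute by blast
  have inj: "inj_on choice (residue_field v)"
    by (metis inj_onI choice_spec)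
  have "residue_system v (choice ` residue_field v)"
  proof
    show "finite (choice ` residue_field v)"
      using assms by simp
    show "val_ge v r 0" if "r \<in> choice ` residue_field v" for r
      using that choice_spec by auto
    show "\<exists>r\<in>choice ` residue_field v. val_ge v (x - r) 1" if x: "val_ge v x 0" for x
    proof -
      have C: "cls x \<in> residue_field v"
        using residue_field_eq x by auto
      have "x \<in> cls (choice (cls x))"
        using choice_spec[OF C] x by (simp add: cls_def)
      then show ?thesis
        using C by (auto simp: cls_def)
    qed
    show "r = r'" if "r \<in> choice ` residue_field v" "r' \<in> choice ` residue_field v" "val_ge v (r - r') 1"
      for r r'
      using that choice_spec cls_eq by (metis imageE)
  qed
  then show ?thesis
    using card_image[OF inj] by blast
qed

section \<open>Inert tori\<close>

lemma canonical_inert_iff: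
  fixes v :: "'a::field_char_0 \<Rightarrow> int"
  assumes "discrete_valuation v"
  shows "canonical_inert v T \<longleftrightarrow> (\<exists>\<alpha>. T = torus \<alpha> 0 1 \<and> \<alpha> \<in> int_units v \<and> (\<nexists>r. - \<alpha> = r * r))"
proof -
  interpret valued_field v
    by unfold_locales fact
  have v4: "v 4 = 2 * v 2"
    using val_square[of "2::'a"] by simp
  have "\<not> is_square (0\<^sup>2 - 4*\<alpha>*1) \<and> even (v (0\<^sup>2 - 4*\<alpha>*1))"
    if "\<alpha> \<in> int_units v" "\<nexists>r. - \<alpha> = r * r" for \<alpha> :: 'a
  proof
    show "\<not> is_square (0\<^sup>2 - 4*\<alpha>*1)"
    proof
      assume "is_square (0\<^sup>2 - 4*\<alpha>*1)"
      then obtain r where "- 4*\<alpha> = r * r"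
        by (auto simp: is_square_def)
      then have "- \<alpha> = (r/2) * (r/2)"
        by (simp add: field_simps)
      then show False
        using that(2) by blast
    qed
    have "v (0\<^sup>2 - 4*\<alpha>*1) = v 4 + v \<alpha>"
      using that(1) by (simp add: val_mult int_units_iff)
    then show "even (v (0\<^sup>2 - 4*\<alpha>*1))"
      using that(1) v4 by (simp add: int_units_iff)
  qed
  moreover have "(\<nexists>r. - \<alpha> = r * r) \<longleftrightarrow> \<not> (\<exists>u \<in> int_units v. - \<alpha> = u * u)"
    if "\<alpha> \<in> int_units v" for \<alpha>
    using that int_units_square_iff int_units_minus by metis
  ultimately show ?thesis
    unfolding canonical_inert_def inert_torus_def by blast
qed

lemma inert_torus_conj_canonical:
  fixes v :: "'a::field_char_0 \<Rightarrow> int"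
  assumes "discrete_valuation v" and "inert_torus v T"
  shows "\<exists>g\<in>GL2. canonical_inert v (conj_set g T)"
proof -
  interpret valued_field v
    by unfold_locales fact
  obtain \<alpha> \<beta> \<gamma> where T: "T = torus \<alpha> \<beta> \<gamma>"
    and nonsquare: "\<not> is_square (\<beta>\<^sup>2 - 4*\<alpha>*\<gamma>)" and even: "even (v (\<beta>\<^sup>2 - 4*\<alpha>*\<gamma>))"
    using assms(2) by (auto simp: inert_torus_def)
  define \<delta> where "\<delta> = \<beta>\<^sup>2 - 4*\<alpha>*\<gamma>"
  have \<delta>: "\<delta> \<noteq> 0" and \<gamma>: "\<gamma> \<noteq> 0"
    using nonsquare by (auto simp: \<delta>_def is_square_def power2_eq_square)
  have "v 4 = 2 * v 2"
    using val_square[of "2::'a"] by simp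
  then have "v (- \<delta> / (4 * (\<gamma> * \<gamma>))) = v \<delta> - 2 * (v 2 + v \<gamma>)"
    using \<delta> \<gamma> by (simp add: val_divide val_mult val_square)
  then obtain t where t: "t \<noteq> 0" "t * t * (- \<delta> / (4 * (\<gamma> * \<gamma>))) \<in> int_units v"
    using exists_square_scaling_unit[of "- \<delta> / (4 * (\<gamma> * \<gamma>))"] even \<delta> \<gamma>
    by (auto simp: \<delta>_def)
  define \<alpha>' where "\<alpha>' = - (t*t)*\<delta>/(4*(\<gamma>*\<gamma>))"
  have "\<alpha>' \<in> int_units v"
    using t(2) by (simp add: \<alpha>'_def field_simps)
  moreover have "\<nexists>r. - \<alpha>' = r * r"
  proof
    assume "\<exists>r. - \<alpha>' = r * r"
    then obtain r where "- \<alpha>' = r * r"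
      by blast
    then have "\<delta> = (2*\<gamma>*r/t) * (2*\<gamma>*r/t)"
      using t(1) \<gamma> by (simp add: \<alpha>'_def field_simps)
    then show False
      using nonsquare[folded \<delta>_def] unfolding is_square_def by blast
  qed
  ultimately have "canonical_inert v (torus \<alpha>' 0 1)"
    using canonical_inert_iff[OF assms(1)] by blast
  then show ?thesis
    using conj_set_torus_diagonal(1)[OF \<gamma> t(1), of \<beta> \<alpha>] conj_set_torus_diagonal(2)[OF \<gamma> t(1), of \<beta>]
    unfolding T \<alpha>'_def \<delta>_def by metis
qed

section \<open>Local fields with odd residue characteristic\<close>

locale odd_local_field =
  fixes v :: "'a::field_char_0 \<Rightarrow> int"
  assumes local_field: "nonarch_local_field v"
    and odd_residue: "odd (card (residue_field v))"

sublocale odd_local_field \<subseteq> complete_valued_field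
  using local_field by unfold_locales (auto simp: nonarch_local_field_def)

context odd_local_field
begin

lemma two_unit: "2 \<in> int_units v"
proof (rule ccontr)
  assume "2 \<notin> int_units v"
  moreover have "val_ge v (1 + 1) 0"
    using val_ge_add[of 1 0 1] by (simp add: val_ge_def)
  ultimately have "val_ge v 2 1"
    by (simp add: int_units_iff_val_ge)
  obtain R where "residue_system v R" "card R = card (residue_field v)"
    using residue_system_exists local_field by (auto simp: nonarch_local_field_def)
  then show False
    using residue_system.even_card_if_two_in_max_ideal \<open>val_ge v 2 1\<close> odd_residue by metis
qed

lemma not_residually_square:
  assumes "w \<in> int_units v" "\<nexists>r. w = r * r"
  shows "\<not> residually_square v w"
  using square_if_square_mod_max_ideal[OF two_unit assms(1)] assms(2)
  by (auto simp: residually_square_def)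

lemma nonsquare_mult_nonsquare:
  assumes a: "a \<in> int_units v" "\<nexists>r. a = r * r"
    and b: "b \<in> int_units v" "\<nexists>r. b = r * r"
  shows "\<exists>r. a * b = r * r"
proof -
  obtain R where "residue_system v R"
    using residue_system_exists local_field by (auto simp: nonarch_local_field_def)
  then have "residually_square v (a * b)"
    using residue_system.residually_square_mult a b not_residually_square by blast
  then show ?thesis
    using square_if_square_mod_max_ideal[OF two_unit int_units_mult[OF a(1) b(1)]]
    by (auto simp: residually_square_def)
qed

lemma norm_form_unit:
  assumes \<alpha>: "\<alpha> \<in> int_units v" "\<nexists>t. - \<alpha> = t * t"
    and s: "val_ge v s 0" and r: "val_ge v r 0" and primitive: "\<not> (val_ge v s 1 \<and> val_ge v r 1)"
  shows "\<alpha> * s * s + r * r \<in> int_units v"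
proof (cases "val_ge v s 1")
  case True
  then have "r * r \<in> int_units v"
    using r primitive int_units_mult by (auto simp: int_units_iff_val_ge)
  moreover have "val_ge v (\<alpha> * s * s) 1"
    using val_ge_mult_int_ring[OF val_ge_mult_int_ring[OF True int_units_val_ge[OF \<alpha>(1)]] s]
    by (simp add: ac_simps)
  ultimately show ?thesis
    using int_units_add_max_ideal by (metis add.commute)
next
  case False
  then have s_unit: "s \<in> int_units v"
    using s by (simp add: int_units_iff_val_ge)
  have "val_ge v (\<alpha> * s * s + r * r) 0"
    using val_ge_add val_ge_mult_int_ring int_units_val_ge[OF \<alpha>(1)] s r by (metis mult.commute)
  moreover have "\<not> val_ge v (\<alpha> * s * s + r * r) 1"
  proof
    assume "val_ge v (\<alpha> * s * s + r * r) 1"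
    then have "val_ge v ((\<alpha> * s * s + r * r) / (s * s)) 1"
      using val_ge_divide_unit int_units_mult[OF s_unit s_unit] by blast
    moreover have "(\<alpha> * s * s + r * r) / (s * s) = - (- \<alpha> - (r / s) * (r / s))"
      using s_unit by (simp add: int_units_iff field_simps)
    ultimately have "residually_square v (- \<alpha>)"
      unfolding residually_square_def by (metis val_ge_minus)
    then show False
      using not_residually_square \<alpha> by simp
  qed
  ultimately show ?thesis
    by (simp add: int_units_iff_val_ge)
qed

lemma canonical_inert_conj_a_mat:
  assumes "canonical_inert v T1" "canonical_inert v T2"
  shows "\<exists>y \<in> int_units v. T1 = conj_set (a_mat y) T2"
proof -
  obtain \<alpha>1 \<alpha>2 where T: "T1 = torus \<alpha>1 0 1" "T2 = torus \<alpha>2 0 1"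
    and \<alpha>: "\<alpha>1 \<in> int_units v" "\<nexists>r. - \<alpha>1 = r * r" "\<alpha>2 \<in> int_units v" "\<nexists>r. - \<alpha>2 = r * r"
    using assms canonical_inert_iff[OF discrete_valuation] by metis
  obtain r where r: "\<alpha>1 * \<alpha>2 = r * r"
    using nonsquare_mult_nonsquare[of "- \<alpha>1" "- \<alpha>2"] \<alpha> by auto
  then have "r * r \<in> int_units v"
    using int_units_mult[OF \<alpha>(1,3)] by simp
  then have y: "r / \<alpha>1 \<in> int_units v"
    using int_units_divide[OF _ \<alpha>(1)] by (simp add: int_units_square_iff)
  have "\<alpha>2 / ((r / \<alpha>1) * (r / \<alpha>1)) = \<alpha>1"
    using r \<alpha>(1) y by (simp add: int_units_iff field_simps)
  then have "T1 = conj_set (a_mat (r / \<alpha>1)) T2"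
    using conj_set_a_mat_torus[of "r / \<alpha>1" \<alpha>2] y by (simp add: T int_units_iff)
  then show ?thesis
    using y by blast
qed

lemma inert_tori_conj:
  assumes "inert_torus v T1" "inert_torus v T2"
  shows "\<exists>g \<in> GL2. conj_set g T1 = T2"
proof -
  obtain g1 where g1: "g1 \<in> GL2" "canonical_inert v (conj_set g1 T1)"
    using inert_torus_conj_canonical[OF discrete_valuation assms(1)] by blast
  obtain g2 where g2: "g2 \<in> GL2" "canonical_inert v (conj_set g2 T2)"
    using inert_torus_conj_canonical[OF discrete_valuation assms(2)] by blast
  obtain y where y: "y \<in> int_units v" "conj_set g2 T2 = conj_set (a_mat y) (conj_set g1 T1)"
    using canonical_inert_conj_a_mat[OF g2(2) g1(2)] by blast
  define g where "g = matrix_inv g2 ** (a_mat y ** g1)"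
  have dets: "det g1 \<noteq> 0" "det g2 \<noteq> 0" "det (a_mat y) \<noteq> 0" "det (matrix_inv g2) \<noteq> 0"
    using g1 g2 y by (simp_all add: GL2_def a_mat_def int_units_iff det_matrix_inv)
  then have "conj_set g T1 = conj_set (matrix_inv g2) (conj_set g2 T2)"
    by (simp add: g_def y(2) conj_set_mult det_mul)
  also have "\<dots> = T2"
    using conj_set_matrix_inv[OF dets(2)] .
  moreover have "g \<in> GL2"
    using dets by (simp add: g_def GL2_def det_mul)
  ultimately show ?thesis
    by blast
qed

lemma GL2_O_eq_B1_O_torus:
  assumes \<alpha>: "\<alpha> \<in> int_units v" "\<nexists>t. - \<alpha> = t * t"
  shows "GL2_O v = set_prod (B1_O v) (torus \<alpha> 0 1 \<inter> GL2_O v)"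
proof
  show "set_prod (B1_O v) (torus \<alpha> 0 1 \<inter> GL2_O v) \<subseteq> GL2_O v"
    using GL2_O_mult by (auto simp: set_prod_def B1_O_def)
  show "GL2_O v \<subseteq> set_prod (B1_O v) (torus \<alpha> 0 1 \<inter> GL2_O v)"
  proof
    fix g assume g: "g \<in> GL2_O v"
    obtain p q r s where g_eq: "g = mk2 p q r s"
      by (rule mk2_exhaust)
    have rs: "val_ge v r 0" "val_ge v s 0" "\<not> (val_ge v r 1 \<and> val_ge v s 1)"
      using g GL2_O_bottom_row_primitive by (auto simp: g_eq GL2_O_mk2)
    let ?t = "mk2 s (- r/\<alpha>) r s"
    have N: "\<alpha> * s * s + r * r \<in> int_units v"
      using norm_form_unit[OF \<alpha>] rs by blast
    then have t: "?t \<in> torus \<alpha> 0 1"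
      using \<alpha> by (intro torus_0_1_mk2_bottom_row) (auto simp: int_units_iff)
    have "s * s - (- r/\<alpha>)*r = (\<alpha> * s * s + r * r) / \<alpha>"
      using \<alpha> by (simp add: int_units_iff field_simps)
    then have t_O: "?t \<in> GL2_O v"
      using rs int_units_divide[OF N \<alpha>(1)] by (simp add: GL2_O_mk2 val_ge_divide_unit[OF \<alpha>(1)])
    then have "g ** matrix_inv ?t \<in> GL2_O v"
      using g GL2_O_mult GL2_O_matrix_inv by blast
    moreover have "g ** matrix_inv ?t \<in> B1"
      using g t_O GL2_O_subset_GL2 unfolding g_eq by (intro mult_matrix_inv_in_B1) auto
    moreover have "g = g ** matrix_inv ?t ** ?t"
      using mult_matrix_inv_mult[symmetric] t torus_subset_GL2 by blast
    ultimately show "g \<in> set_prod (B1_O v) (torus \<alpha> 0 1 \<inter> GL2_O v)"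
      using t \<open>?t \<in> GL2_O v\<close> unfolding set_prod_def B1_O_def by blast
  qed
qed

lemma canonical_inert_decompositions:
  assumes "canonical_inert v T"
  shows "GL2 = set_prod B1 T \<and> GL2 = set_prod T B1 \<and>
    GL2_O v = set_prod (B1_O v) (T \<inter> GL2_O v) \<and> GL2_O v = set_prod (T \<inter> GL2_O v) (B1_O v)"
proof -
  obtain \<alpha> where T: "T = torus \<alpha> 0 1" and \<alpha>: "\<alpha> \<in> int_units v" "\<nexists>r. - \<alpha> = r * r"
    using assms canonical_inert_iff[OF discrete_valuation] by metis
  have \<alpha>0: "\<alpha> \<noteq> 0"
    using \<alpha>(1) by (simp add: int_units_iff)
  have G: "GL2 = set_prod B1 T" and K: "GL2_O v = set_prod (B1_O v) (T \<inter> GL2_O v)"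
    using GL2_eq_B1_torus[OF \<alpha>0 \<alpha>(2)] GL2_O_eq_B1_O_torus[OF \<alpha>] by (simp_all add: T)
  have GL2_inv: "\<And>g. g \<in> GL2 \<Longrightarrow> matrix_inv g \<in> GL2"
    by (simp add: GL2_def det_matrix_inv)
  have T_inv: "\<And>t. t \<in> T \<Longrightarrow> matrix_inv t \<in> T"
    using torus_0_1_matrix_inv[OF \<alpha>0] by (simp add: T)
  have "GL2 = set_prod T B1"
    using set_prod_swap[OF G B1_subset_GL2 _ GL2_inv B1_matrix_inv T_inv] torus_subset_GL2 T
    by blast
  moreover have "GL2_O v = set_prod (T \<inter> GL2_O v) (B1_O v)"
    using set_prod_swap[OF K] GL2_O_subset_GL2 torus_0_1_matrix_inv[OF \<alpha>0] GL2_O_matrix_inv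
      B1_matrix_inv
    by (auto simp: T B1_O_def)
  ultimately show ?thesis
    using G K by blast
qed

end

theorem proposition2p3:
  fixes v :: "'a::field_char_0 \<Rightarrow> int"
  assumes "nonarch_local_field v"
    and "odd (card (residue_field v))"
  shows "(\<forall>T1 T2. inert_torus v T1 \<longrightarrow> inert_torus v T2 \<longrightarrow>
            (\<exists>g \<in> GL2. conj_set g T1 = T2))
    \<and> (\<forall>T. inert_torus v T \<longrightarrow> (\<exists>g \<in> GL2. canonical_inert v (conj_set g T)))
    \<and> (\<forall>T1 T2. canonical_inert v T1 \<longrightarrow> canonical_inert v T2 \<longrightarrow>
            (\<exists>y \<in> int_units v. T1 = conj_set (a_mat y) T2))
    \<and> (\<forall>T. canonical_inert v T \<longrightarrow>
            GL2 = set_prod B1 T \<and> GL2 = set_prod T B1 \<and>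
            GL2_O v = set_prod (B1_O v) (T \<inter> GL2_O v) \<and>
            GL2_O v = set_prod (T \<inter> GL2_O v) (B1_O v))"
proof -
  interpret odd_local_field v
    using assms by unfold_locales
  show ?thesis
    using inert_tori_conj inert_torus_conj_canonical[OF discrete_valuation] canonical_inert_conj_a_mat
      canonical_inert_decompositions
    by blast
qed

end
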